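(* Let $m,n,w,d$ be positive integers with $w\le m$. For all positive integers $a,m',w'$ such that $am'\le m$ and $aw'\le w\le aw'+m-am'$, we have $A(m,n,w,d)\ge A(m',an,w',d)$. Consequently, $$C\left(\left\lfloor\frac{m}{w}\right\rfloor,nw,d\right)\le A(m,n,w,d)\le B(mn,nw,d).$$
   Context: $J(m,w)$ denotes the set of binary vectors of length $m$ and Hamming weight $w$. Elements of $J(m,w)^n$ are identified with $m\times n$ binary matrices all of whose columns have weight $w$, with binary Hamming distance. $A(m,n,w,d)$ is the maximum cardinality of a nonempty subset of $J(m,w)^n$ with pairwise Hamming distances at least $2d$. $B(N,W,d)$ is the maximum cardinality of a nonempty subset of $J(N,W)$ with pairwise Hamming distances at least $2d$. $C(q,n,d)$ is the maximum cardinality of a nonempty subset of $[q]^n$, $[q]=\{0,\dots,q-1\}$, with pairwise Hamming distances at least $d$. *)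

theory Defs
  imports Main
begin

definition hamming :: "'a list \<Rightarrow> 'a list \<Rightarrow> nat" where
  "hamming xs ys = card {i. i < length xs \<and> xs ! i \<noteq> ys ! i}"

definition J :: "nat \<Rightarrow> nat \<Rightarrow> bool list set" where
  "J m w = {x. length x = m \<and> count_list x True = w}"

text \<open>J(m,w)^n: m x n binary matrices, given as the list of their n columns,
  each column of weight w.\<close>
definition Jpow :: "nat \<Rightarrow> nat \<Rightarrow> nat \<Rightarrow> bool list list set" where
  "Jpow m n w = {M. length M = n \<and> (\<forall>c\<in>set M. c \<in> J m w)}"

definition mat_dist :: "bool list list \<Rightarrow> bool list list \<Rightarrow> nat" where
  "mat_dist M N = (\<Sum>j<length M. hamming (M ! j) (N ! j))"

definition qwords :: "nat \<Rightarrow> nat \<Rightarrow> nat list set" where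
  "qwords q n = {x. length x = n \<and> (\<forall>a\<in>set x. a < q)}"

text \<open>Maximum cardinality of a nonempty subset of X with pairwise distances
  at least delta (0 if X is empty, by the convention Sup {} = 0 on nat).\<close>
definition max_code :: "'a set \<Rightarrow> ('a \<Rightarrow> 'a \<Rightarrow> nat) \<Rightarrow> nat \<Rightarrow> nat" where
  "max_code X dist delta = Sup (card ` {S. S \<subseteq> X \<and> S \<noteq> {} \<and>
      (\<forall>x\<in>S. \<forall>y\<in>S. x \<noteq> y \<longrightarrow> delta \<le> dist x y)})"

definition A :: "nat \<Rightarrow> nat \<Rightarrow> nat \<Rightarrow> nat \<Rightarrow> nat" where
  "A m n w d = max_code (Jpow m n w) mat_dist (2 * d)"

definition B :: "nat \<Rightarrow> nat \<Rightarrow> nat \<Rightarrow> nat" where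
  "B N W d = max_code (J N W) hamming (2 * d)"

definition C :: "nat \<Rightarrow> nat \<Rightarrow> nat \<Rightarrow> nat" where
  "C q n d = max_code (qwords q n) hamming d"

end

theory Submission
  imports Defs
begin

text \<open>Each inequality comes from an injective map between the ambient spaces that does not
  decrease the distance (after scaling the threshold), so it carries codes to codes of the
  same size.
  Grouping the columns of an \<open>m' \<times> an\<close> matrix into blocks of \<open>a\<close> consecutive columns and
  stacking each block on top of a fixed padding column with \<open>m - am'\<close> entries and
  \<open>w - aw'\<close> ones gives an \<open>m \<times> n\<close> matrix with columns of weight \<open>w\<close>, at the same distance.
  Replacing each symbol \<open>s\<close> of a \<open>q\<close>-ary word by the \<open>s\<close>-th unit column of height \<open>q\<close>
  doubles distances, so \<open>C(q,nw,d) \<le> A(q,wn,1,d)\<close>; grouping with \<open>a = w\<close>, \<open>m' = \<lfloor>m/w\<rfloor>\<close>,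
  \<open>w' = 1\<close> then gives the lower bound. Concatenating the columns of a matrix is an
  isometry into \<open>J(mn,nw)\<close>, which gives the upper bound.\<close>

lemma card_le_max_code:
  assumes "finite X" "S \<subseteq> X" "S \<noteq> {}" "\<forall>x\<in>S. \<forall>y\<in>S. x \<noteq> y \<longrightarrow> \<delta> \<le> dist x y"
  shows "card S \<le> max_code X dist \<delta>"
proof -
  let ?codes = "{S. S \<subseteq> X \<and> S \<noteq> {} \<and> (\<forall>x\<in>S. \<forall>y\<in>S. x \<noteq> y \<longrightarrow> \<delta> \<le> dist x y)}"
  have "finite (card ` ?codes)"
    using \<open>finite X\<close> by (intro finite_imageI) (rule finite_subset[of _ "Pow X"]; auto)
  moreover have "card S \<in> card ` ?codes"
    using assms(2-4) by blast
  ultimately show ?thesis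
    unfolding max_code_def by (simp add: le_cSup_finite)
qed

lemma max_code_le_embedding:
  assumes "finite Y" and "f ` X \<subseteq> Y" and "\<And>z. d2 z z < \<delta>'"
    and "\<And>x y. \<lbrakk>x \<in> X; y \<in> X; x \<noteq> y; \<delta> \<le> d1 x y\<rbrakk> \<Longrightarrow> \<delta>' \<le> d2 (f x) (f y)"
  shows "max_code X d1 \<delta> \<le> max_code Y d2 \<delta>'"
proof -
  let ?codes = "{S. S \<subseteq> X \<and> S \<noteq> {} \<and> (\<forall>x\<in>S. \<forall>y\<in>S. x \<noteq> y \<longrightarrow> \<delta> \<le> d1 x y)}"
  have bound: "card S \<le> max_code Y d2 \<delta>'" if S: "S \<in> ?codes" for S
  proof -
    have separated: "\<delta>' \<le> d2 (f x) (f y)" if "x \<in> S" "y \<in> S" "x \<noteq> y" for x y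
      using S that assms(4) by blast
    \<comment> \<open>separation forces \<open>f x \<noteq> f y\<close>, because \<open>d2\<close> stays below \<open>\<delta>'\<close> on the diagonal\<close>
    have inj: "inj_on f S"
    proof (rule inj_onI, rule ccontr)
      fix x y assume "x \<in> S" "y \<in> S" "f x = f y" "x \<noteq> y"
      then show False
        using separated[of x y] assms(3)[of "f x"] by simp
    qed
    have "\<delta>' \<le> d2 u v" if uv: "u \<in> f ` S" "v \<in> f ` S" "u \<noteq> v" for u v
    proof -
      obtain x y where "x \<in> S" "y \<in> S" "u = f x" "v = f y"
        using uv(1,2) by blast
      with uv(3) show ?thesis
        using separated by blast
    qed
    moreover have "f ` S \<subseteq> Y" "f ` S \<noteq> {}"
      using S assms(2) by auto
    ultimately have "card (f ` S) \<le> max_code Y d2 \<delta>'"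
      using \<open>finite Y\<close> by (intro card_le_max_code) auto
    with inj show ?thesis
      by (simp add: card_image)
  qed
  show ?thesis
  proof (cases "?codes = {}")
    case True
    then show ?thesis
      unfolding max_code_def by (simp add: Sup_nat_def)
  next
    case False
    then show ?thesis
      unfolding max_code_def by (intro cSup_least) (auto intro: bound[unfolded max_code_def])
  qed
qed

lemma hamming_eq_sum: "hamming xs ys = (\<Sum>i<length xs. if xs ! i \<noteq> ys ! i then 1 else 0)"
proof -
  have "hamming xs ys = (\<Sum>i\<in>{i\<in>{..<length xs}. xs ! i \<noteq> ys ! i}. 1)"
    unfolding hamming_def by (simp add: lessThan_def conj_commute)
  also have "\<dots> = (\<Sum>i<length xs. if xs ! i \<noteq> ys ! i then 1 else 0)"
    by (rule sum.inter_filter) simp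
  finally show ?thesis .
qed

lemma hamming_Nil [simp]: "hamming [] ys = 0"
  by (simp add: hamming_def)

lemma hamming_Cons [simp]: "hamming (x # xs) (y # ys) = (if x \<noteq> y then 1 else 0) + hamming xs ys"
  by (simp only: hamming_eq_sum length_Cons sum.lessThan_Suc_shift) simp

lemma hamming_self [simp]: "hamming xs xs = 0"
  by (simp add: hamming_def)

lemma hamming_append:
  "length xs = length xs' \<Longrightarrow> hamming (xs @ ys) (xs' @ ys') = hamming xs xs' + hamming ys ys'"
  by (induction xs xs' rule: list_induct2) auto

lemma mat_dist_Nil [simp]: "mat_dist [] N = 0"
  by (simp add: mat_dist_def)

lemma mat_dist_Cons [simp]: "mat_dist (c # M) (c' # N) = hamming c c' + mat_dist M N"
  by (simp only: mat_dist_def length_Cons sum.lessThan_Suc_shift) simp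

lemma mat_dist_self [simp]: "mat_dist M M = 0"
  by (simp add: mat_dist_def)

lemma mat_dist_append:
  "length M = length N \<Longrightarrow> mat_dist (M @ M') (N @ N') = mat_dist M N + mat_dist M' N'"
  by (induction M N rule: list_induct2) auto

lemma hamming_concat_eq_mat_dist:
  assumes "length M = length N" "\<forall>c\<in>set M. length c = l" "\<forall>c\<in>set N. length c = l"
  shows "hamming (concat M) (concat N) = mat_dist M N"
  using assms by (induction M N rule: list_induct2) (simp_all add: hamming_append)

lemma length_concat_uniform: "\<forall>c\<in>set M. length c = l \<Longrightarrow> length (concat M) = length M * l"
  by (induction M) auto

lemma finite_J: "finite (J m w)"
  unfolding J_def
  by (rule finite_subset[OF _ finite_lists_length_eq[of "UNIV :: bool set" m]]) auto

lemma finite_Jpow: "finite (Jpow m n w)"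
  unfolding Jpow_def
  by (rule finite_subset[OF _ finite_lists_length_eq[OF finite_J, of m w n]]) auto

lemma concat_in_J: "M \<in> Jpow m n w \<Longrightarrow> concat M \<in> J (n * m) (n * w)"
  unfolding Jpow_def J_def
  by (induction M arbitrary: n) auto

lemma A_le_B:
  assumes "0 < d"
  shows "A m n w d \<le> B (m * n) (n * w) d"
  unfolding A_def B_def
proof (rule max_code_le_embedding[where f = concat])
  show "finite (J (m * n) (n * w))"
    by (rule finite_J)
  show "concat ` Jpow m n w \<subseteq> J (m * n) (n * w)"
    using concat_in_J by (metis image_subsetI mult.commute)
  show "hamming z z < 2 * d" for z
    using assms by simp
  show "2 * d \<le> hamming (concat M) (concat N)"
    if "M \<in> Jpow m n w" "N \<in> Jpow m n w" "M \<noteq> N" "2 * d \<le> mat_dist M N" for M N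
  proof -
    have "hamming (concat M) (concat N) = mat_dist M N"
      using that(1,2) unfolding Jpow_def J_def by (intro hamming_concat_eq_mat_dist[where l = m]) auto
    with that(4) show ?thesis by simp
  qed
qed

primrec group_columns :: "nat \<Rightarrow> bool list \<Rightarrow> nat \<Rightarrow> bool list list \<Rightarrow> bool list list" where
  "group_columns a pad 0 M = []"
| "group_columns a pad (Suc k) M =
     (concat (take a M) @ pad) # group_columns a pad k (drop a M)"

lemma group_columns_in_Jpow:
  assumes "length pad = m - a * m'" "count_list pad True = w - a * w'" "a * m' \<le> m" "a * w' \<le> w"
  shows "M \<in> Jpow m' (a * k) w' \<Longrightarrow> group_columns a pad k M \<in> Jpow m k w"
proof (induction k arbitrary: M)
  case 0
  then show ?case by (simp add: Jpow_def)
next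
  case (Suc k)
  have "take a M \<in> Jpow m' a w'" "drop a M \<in> Jpow m' (a * k) w'"
    using Suc.prems by (auto simp: Jpow_def dest: in_set_takeD in_set_dropD)
  then have "concat (take a M) \<in> J (a * m') (a * w')"
    and "group_columns a pad k (drop a M) \<in> Jpow m k w"
    using concat_in_J Suc.IH by blast+
  with assms show ?case
    by (simp add: Jpow_def J_def)
qed

lemma mat_dist_group_columns:
  assumes "length M = a * k" "length N = a * k" "\<forall>c\<in>set M. length c = l" "\<forall>c\<in>set N. length c = l"
  shows "mat_dist (group_columns a pad k M) (group_columns a pad k N) = mat_dist M N"
  using assms
proof (induction k arbitrary: M N)
  case 0
  then show ?case by simp
next
  case (Suc k)
  have blocks: "length (take a M) = a" "length (take a N) = a"
    "\<forall>c\<in>set (take a M). length c = l" "\<forall>c\<in>set (take a N). length c = l"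
    using Suc.prems by (auto dest: in_set_takeD)
  have rest: "length (drop a M) = a * k" "length (drop a N) = a * k"
    "\<forall>c\<in>set (drop a M). length c = l" "\<forall>c\<in>set (drop a N). length c = l"
    using Suc.prems by (auto dest: in_set_dropD)
  have "length (concat (take a M)) = length (concat (take a N))"
    using length_concat_uniform[OF blocks(3)] length_concat_uniform[OF blocks(4)] blocks(1,2)
    by simp
  then have "mat_dist (group_columns a pad (Suc k) M) (group_columns a pad (Suc k) N)
      = mat_dist (take a M) (take a N) + mat_dist (drop a M) (drop a N)"
    using blocks Suc.IH[OF rest]
    by (simp add: hamming_append hamming_concat_eq_mat_dist[OF _ blocks(3,4)])
  also have "\<dots> = mat_dist M N"
    using blocks mat_dist_append[of "take a M" "take a N" "drop a M" "drop a N"] by simp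
  finally show ?case .
qed

lemma A_le_A_by_grouping:
  assumes "0 < d" "a * m' \<le> m" "a * w' \<le> w" "w \<le> a * w' + m - a * m'"
  shows "A m' (a * n) w' d \<le> A m n w d"
proof -
  define pad where "pad = replicate (w - a * w') True @ replicate (m - a * m' - (w - a * w')) False"
  have "length pad = m - a * m'" "count_list pad True = w - a * w'"
    using assms by (simp_all add: pad_def count_list_eq_length_filter filter_replicate)
  note in_Jpow = group_columns_in_Jpow[OF this assms(2,3)]
  show ?thesis
    unfolding A_def
  proof (rule max_code_le_embedding[where f = "group_columns a pad n"])
    show "finite (Jpow m n w)"
      by (rule finite_Jpow)
    show "group_columns a pad n ` Jpow m' (a * n) w' \<subseteq> Jpow m n w"
      using in_Jpow by blast
    show "mat_dist z z < 2 * d" for z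
      using assms by simp
    show "2 * d \<le> mat_dist (group_columns a pad n M) (group_columns a pad n N)"
      if "M \<in> Jpow m' (a * n) w'" "N \<in> Jpow m' (a * n) w'" "M \<noteq> N" "2 * d \<le> mat_dist M N"
      for M N
    proof -
      have "mat_dist (group_columns a pad n M) (group_columns a pad n N) = mat_dist M N"
        using that(1,2) unfolding Jpow_def J_def by (intro mat_dist_group_columns[where l = m']) auto
      with that(4) show ?thesis by simp
    qed
  qed
qed

definition unit_column :: "nat \<Rightarrow> nat \<Rightarrow> bool list" where
  "unit_column q s = map (\<lambda>i. i = s) [0..<q]"

lemma unit_column_in_J: "s < q \<Longrightarrow> unit_column q s \<in> J q 1"
  unfolding J_def unit_column_def
  by (simp add: count_list_eq_length_filter filter_map comp_def distinct_length_filter)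

lemma hamming_unit_column:
  assumes "s < q" "t < q"
  shows "hamming (unit_column q s) (unit_column q t) = (if s \<noteq> t then 2 else 0)"
proof -
  have "{i. i < length (unit_column q s) \<and> unit_column q s ! i \<noteq> unit_column q t ! i}
      = (if s \<noteq> t then {s, t} else {})"
    using assms unfolding unit_column_def by auto
  then show ?thesis
    unfolding hamming_def by simp
qed

lemma mat_dist_map_unit_column:
  assumes "x \<in> qwords q k" "y \<in> qwords q k"
  shows "mat_dist (map (unit_column q) x) (map (unit_column q) y) = 2 * hamming x y"
proof -
  have "mat_dist (map (unit_column q) x) (map (unit_column q) y)
      = (\<Sum>j<length x. 2 * (if x ! j \<noteq> y ! j then 1 else 0))"
    using assms unfolding mat_dist_def qwords_def
    by (intro sum.cong) (auto simp: hamming_unit_column)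
  then show ?thesis
    by (simp add: hamming_eq_sum sum_distrib_left)
qed

lemma C_le_A_unit_weight:
  assumes "0 < d"
  shows "C q k d \<le> A q k 1 d"
  unfolding A_def C_def
proof (rule max_code_le_embedding[where f = "map (unit_column q)"])
  show "finite (Jpow q k 1)"
    by (rule finite_Jpow)
  show "map (unit_column q) ` qwords q k \<subseteq> Jpow q k 1"
    unfolding qwords_def Jpow_def using unit_column_in_J by auto
  show "mat_dist z z < 2 * d" for z
    using assms by simp
  show "2 * d \<le> mat_dist (map (unit_column q) x) (map (unit_column q) y)"
    if "x \<in> qwords q k" "y \<in> qwords q k" "x \<noteq> y" "d \<le> hamming x y" for x y
    using that by (simp add: mat_dist_map_unit_column)
qed

theorem proposition6:
  fixes m n w d :: nat
  assumes "0 < m" "0 < n" "0 < w" "0 < d" "w \<le> m"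
  shows "(\<forall>a m' w'. 0 < a \<and> 0 < m' \<and> 0 < w' \<and> a * m' \<le> m \<and>
            a * w' \<le> w \<and> w \<le> a * w' + m - a * m' \<longrightarrow>
            A m' (a * n) w' d \<le> A m n w d)
       \<and> C (m div w) (n * w) d \<le> A m n w d
       \<and> A m n w d \<le> B (m * n) (n * w) d"
proof (intro conjI)
  show "\<forall>a m' w'. 0 < a \<and> 0 < m' \<and> 0 < w' \<and> a * m' \<le> m \<and>
            a * w' \<le> w \<and> w \<le> a * w' + m - a * m' \<longrightarrow>
            A m' (a * n) w' d \<le> A m n w d"
    using A_le_A_by_grouping \<open>0 < d\<close> by blast
  have "w * (m div w) \<le> m"
    by (simp add: mult.commute)
  moreover from this have "w \<le> w * 1 + m - w * (m div w)"
    by linarith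
  ultimately have "A (m div w) (w * n) 1 d \<le> A m n w d"
    using A_le_A_by_grouping[of d w "m div w" m 1 w n] \<open>0 < d\<close> by simp
  then show "C (m div w) (n * w) d \<le> A m n w d"
    using C_le_A_unit_weight[OF \<open>0 < d\<close>, of "m div w" "n * w"] by (simp add: mult.commute)
  show "A m n w d \<le> B (m * n) (n * w) d"
    using A_le_B \<open>0 < d\<close> by blast
qed

end
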